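(* Let $\sqrt5$ denote the square root of $5$ in $\mathbb{Z}_{11}$ with $\sqrt5\equiv7\pmod{11}$. Let $\alpha\ge1$ and $j\in\{1,\dots,10\}$, and let $z\in\mathbb{Z}_{11}$ satisfy $z\equiv\frac{2}{\sqrt5}+j\cdot11^{2\alpha-1}\pmod{11^{2\alpha}}$. Then $f_z(y)=y^2-\sqrt5\,zy+1$ has no root in $\mathbb{Z}_{11}$. *)

theory Defs
  imports Main "HOL-Number_Theory.Cong"
begin

text \<open>The p-adic integers Z_p, modelled as the inverse limit of Z/p^n Z:
  coherent sequences of residues x n in [0, p^n) with x (n+1) mod p^n = x n.\<close>

definition padic_ints :: "int \<Rightarrow> (nat \<Rightarrow> int) set" where
  "padic_ints p = {x. \<forall>n. 0 \<le> x n \<and> x n < p ^ n \<and> x (Suc n) mod p ^ n = x n}"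

definition padd :: "int \<Rightarrow> (nat \<Rightarrow> int) \<Rightarrow> (nat \<Rightarrow> int) \<Rightarrow> (nat \<Rightarrow> int)" where
  "padd p x y = (\<lambda>n. (x n + y n) mod p ^ n)"

definition psub :: "int \<Rightarrow> (nat \<Rightarrow> int) \<Rightarrow> (nat \<Rightarrow> int) \<Rightarrow> (nat \<Rightarrow> int)" where
  "psub p x y = (\<lambda>n. (x n - y n) mod p ^ n)"

definition pmul :: "int \<Rightarrow> (nat \<Rightarrow> int) \<Rightarrow> (nat \<Rightarrow> int) \<Rightarrow> (nat \<Rightarrow> int)" where
  "pmul p x y = (\<lambda>n. (x n * y n) mod p ^ n)"

definition pconst :: "int \<Rightarrow> int \<Rightarrow> (nat \<Rightarrow> int)" where
  "pconst p c = (\<lambda>n. c mod p ^ n)"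

end

theory Submission
  imports Defs "HOL-Computational_Algebra.Primes"
begin

text \<open>Complete the square: a root y of f gives X = 2y - sqrt5 z with
  X^2 = (sqrt5 z)^2 - 4, and sqrt5 z = 2 + j sqrt5 11^(2 alpha - 1) modulo 11^(2 alpha), so
  X^2 = 4 j sqrt5 11^(2 alpha - 1) modulo 11^(2 alpha). A square divisible by the odd power
  11^(2 alpha - 1) is divisible by 11^(2 alpha), hence 11 divides 4 j sqrt5, which is
  impossible since sqrt5 is a unit. Everything happens at the single level 2 alpha of
  the inverse limit.\<close>

lemma prime_power_dvd_square_imp_dvd:
  fixes X p :: int and a :: nat
  assumes p: "prime p" and a: "a \<ge> 1" and d: "p ^ (2*a - 1) dvd X^2"
  shows "p ^ a dvd X"
  using a d
proof (induction a arbitrary: X rule: nat_induct_at_least)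
  case base
  then show ?case using p by (simp add: prime_dvd_power_iff)
next
  case (Suc a)
  have "p dvd X^2" using Suc.hyps Suc.prems dvd_trans[of p "p ^ (2 * Suc a - 1)"] by simp
  then obtain X' where X: "X = p * X'" using p prime_dvd_power by (blast elim: dvdE)
  have exponent: "2 * Suc a - 1 = Suc (Suc (2*a - 1))" using Suc.hyps by simp
  have "p^2 * p ^ (2*a - 1) dvd p^2 * X'^2"
    using Suc.prems unfolding X exponent by (simp add: power_mult_distrib power2_eq_square ac_simps)
  then have "p ^ (2*a - 1) dvd X'^2" using p by (simp add: dvd_mult_cancel_left)
  then show ?case unfolding X using Suc.IH by simp
qed

lemma quadratic_no_root_mod_prime_power:
  fixes p c e y :: int and a :: nat
  assumes p: "prime p" and a: "a \<ge> 1"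
    and root: "[y * y - c * y + 1 = 0] (mod p ^ (2*a))"
    and c: "[c = 2 + e * p ^ (2*a - 1)] (mod p ^ (2*a))"
    and e: "\<not> p dvd 4 * e"
  shows False
proof -
  define k where "k = 2*a - 1"
  define X where "X = 2*y - c"
  have Suc_k: "2*a = Suc k" using a unfolding k_def by simp
  have "[X^2 = 4 * (y * y - c * y + 1) + (c^2 - 4)] (mod p ^ (2*a))"
    unfolding X_def by (simp add: algebra_simps power2_eq_square)
  also have "[4 * (y * y - c * y + 1) + (c^2 - 4) = 4 * 0 + ((2 + e * p^k)^2 - 4)] (mod p ^ (2*a))"
    using root c unfolding k_def by (intro cong_add cong_mult cong_diff cong_pow) auto
  also have "(2 + e * p^k)^2 - 4 = 4 * e * p^k + e^2 * p^(k + k)"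
    by (simp add: algebra_simps power2_eq_square power_add)
  also have "[4 * 0 + (4 * e * p^k + e^2 * p^(k + k)) = 4 * e * p^k] (mod p ^ (2*a))"
  proof -
    have "p ^ (2*a) dvd p ^ (k + k)" using a unfolding k_def by (intro le_imp_power_dvd) simp
    then show ?thesis by (simp add: cong_iff_dvd_diff)
  qed
  finally have X_sq: "[X^2 = 4 * e * p^k] (mod p ^ (2*a))" .
  have "p ^ k dvd X^2"
    using cong_dvd_modulus[OF X_sq, of "p ^ k"] Suc_k by (simp add: cong_dvd_iff)
  then have "p ^ a dvd X" using prime_power_dvd_square_imp_dvd[OF p a] unfolding k_def by simp
  then have "p ^ (2*a) dvd X^2" by (metis mult_2 power_add power2_eq_square mult_dvd_mono)
  then have "p ^ k * p dvd p ^ k * (4 * e)"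
    using X_sq Suc_k by (simp add: cong_dvd_iff ac_simps)
  then show False using e p by (simp add: dvd_mult_cancel_left)
qed

lemma pmul_eq_pconst_cong:
  assumes "pmul p x y = pconst p c"
  shows "[x n * y n = c] (mod p ^ n)"
  using fun_cong[OF assms, of n] by (simp add: pmul_def pconst_def cong_def)

lemma padic_quadratic_root_cong:
  assumes "padd p (psub p (pmul p y y) (pmul p (pmul p a b) y)) (pconst p 1) = pconst p 0"
  shows "[y n * y n - a n * b n * y n + 1 = 0] (mod p ^ n)"
  using fun_cong[OF assms, of n]
  by (simp add: padd_def psub_def pmul_def pconst_def cong_def mod_simps)

theorem lemma5p6:
  fixes s w z :: "nat \<Rightarrow> int" and \<alpha> j :: nat
  assumes s_in: "s \<in> padic_ints 11"
    and s_sq: "pmul 11 s s = pconst 11 5"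
    and s_7: "[s 1 = 7] (mod 11)"
    and w_in: "w \<in> padic_ints 11"
    and w_def: "pmul 11 s w = pconst 11 2"
    and alpha: "\<alpha> \<ge> 1"
    and j: "j \<in> {1..10}"
    and z_in: "z \<in> padic_ints 11"
    and z_cong: "[z (2*\<alpha>) = w (2*\<alpha>) + int j * 11 ^ (2*\<alpha> - 1)] (mod 11 ^ (2*\<alpha>))"
  shows "\<not> (\<exists>y \<in> padic_ints 11.
            padd 11 (psub 11 (pmul 11 y y) (pmul 11 (pmul 11 s z) y)) (pconst 11 1) = pconst 11 0)"
proof
  assume "\<exists>y \<in> padic_ints 11.
            padd 11 (psub 11 (pmul 11 y y) (pmul 11 (pmul 11 s z) y)) (pconst 11 1) = pconst 11 0"
  then obtain y where "padd 11 (psub 11 (pmul 11 y y) (pmul 11 (pmul 11 s z) y)) (pconst 11 1) = pconst 11 0"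
    by blast
  define n where "n = 2*\<alpha>"
  define S where "S = s n"
  have root: "[y n * y n - (S * z n) * y n + 1 = 0] (mod 11 ^ n)"
    using padic_quadratic_root_cong[OF \<open>padd _ _ _ = _\<close>] unfolding S_def .
  have "[S * z n = S * (w n + int j * 11 ^ (n - 1))] (mod 11 ^ n)"
    using z_cong unfolding n_def by (simp add: cong_mult)
  also have "[S * (w n + int j * 11 ^ (n - 1)) = 2 + (S * int j) * 11 ^ (n - 1)] (mod 11 ^ n)"
    using pmul_eq_pconst_cong[OF w_def, of n] unfolding S_def
    by (simp add: distrib_left cong_add ac_simps)
  finally have c: "[S * z n = 2 + (S * int j) * 11 ^ (n - 1)] (mod 11 ^ n)" .
  have "\<not> (11::int) dvd S"
  proof
    assume "11 dvd S"
    then have "11 dvd S * S" by simp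
    moreover have "[S * S = 5] (mod 11)"
      using cong_dvd_modulus[OF pmul_eq_pconst_cong[OF s_sq, of n], of 11] alpha
      unfolding S_def n_def by simp
    ultimately show False by (simp add: cong_dvd_iff)
  qed
  moreover have "\<not> (11::int) dvd int j" using j by (auto dest: zdvd_imp_le)
  ultimately have "\<not> (11::int) dvd 4 * (S * int j)" by (simp add: prime_dvd_mult_iff)
  then show False
    using quadratic_no_root_mod_prime_power[of 11 \<alpha>] root c alpha unfolding n_def by simp
qed

end
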